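(* For any $d_x\in\mathbb N$ and any $\alpha\in(0,0.5)$, there exists a $\textsc{ReLU}$ network $f:\mathbb R^{d_x}\rightarrow\mathbb R^{d_x}$ of width $d_x+1$ such that $f(x)=(1,\dots,1)$ for all $x\in\mathbb R^{d_x}\setminus[0,1]^{d_x}$, $f(x)=x$ for all $x\in[\alpha,1-\alpha]^{d_x}$, and $f(\mathbb R^{d_x})\subset[0,1]^{d_x}$.
   Context: A $\textsc{ReLU}$ network is $t_L\circ\sigma_{L-1}\circ\cdots\circ\sigma_1\circ t_1$ with affine $t_\ell:\mathbb R^{d_{\ell-1}}\to\mathbb R^{d_\ell}$ and coordinatewise $\textsc{ReLU}$ $\sigma_\ell(x)=\max\{x,0\}$; its width is $\max\{d_1,\dots,d_{L-1}\}$. *)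

theory Defs
  imports Complex_Main
begin

text \<open>Vectors in R^n are real lists of length n. An affine layer R^m -> R^n is a pair
(W, b) of an n-by-m matrix W (list of n rows, each of length m) and a bias b of length n.\<close>

type_synonym layer = "real list list \<times> real list"

definition affine :: "layer \<Rightarrow> real list \<Rightarrow> real list" where
  "affine l x = map2 (\<lambda>row bi. sum_list (map2 (*) row x) + bi) (fst l) (snd l)"

definition layer_ok :: "nat \<Rightarrow> nat \<Rightarrow> layer \<Rightarrow> bool" where
  "layer_ok m n l \<longleftrightarrow> length (fst l) = n \<and> length (snd l) = n \<and>
     (\<forall>row \<in> set (fst l). length row = m)"

definition relu_vec :: "real list \<Rightarrow> real list" where
  "relu_vec x = map (\<lambda>z. max z 0) x"

fun eval_net :: "layer list \<Rightarrow> real list \<Rightarrow> real list" where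
  "eval_net [] x = x"
| "eval_net [l] x = affine l x"
| "eval_net (l # ls) x = eval_net ls (relu_vec (affine l x))"

definition relu_net :: "nat list \<Rightarrow> layer list \<Rightarrow> bool" where
  "relu_net ds ls \<longleftrightarrow> ls \<noteq> [] \<and> length ds = length ls + 1 \<and>
     (\<forall>i < length ls. layer_ok (ds ! i) (ds ! Suc i) (ls ! i))"

text \<open>Width = max {d_1, ..., d_{L-1}} (0 if there are no hidden layers).\<close>
definition net_width :: "nat list \<Rightarrow> nat" where
  "net_width ds = Max (insert 0 (set (butlast (tl ds))))"

definition cube :: "nat \<Rightarrow> real \<Rightarrow> real \<Rightarrow> real list set" where
  "cube n a b = {x. length x = n \<and> (\<forall>i < n. a \<le> x ! i \<and> x ! i \<le> b)}"

end

theory Submission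
  imports Defs
begin

text \<open>The network keeps the coordinates of x in d neurons and uses one extra neuron as an
alarm that becomes at least 1 as soon as some coordinate leaves [0, 1] and stays 0 while all
coordinates lie in [\<alpha>, 1 - \<alpha>]. Coordinate x_i is tested by two layers: the first feeds
max x_i 0 into the alarm and replaces it by y_i = max (1 - max x_i 0) 0, the second feeds y_i
into the alarm. After each feed the alarm passes through the steep ramp
t \<mapsto> max ((t - (1 - \<alpha>)) / \<alpha>) 0, which maps (-\<infinity>, 1 - \<alpha>] to 0 and [1, \<infinity>) into
[1, \<infinity>); so the two feeds detect x_i > 1 and x_i < 0 respectively, and an alarm once raised
stays raised. Finally the output 1 - max (y_i - alarm) 0 equals x_i inside the inner cube,
equals 1 after an alarm, and lies in [0, 1] everywhere.\<close>

definition layer_of :: "nat \<Rightarrow> nat \<Rightarrow> (nat \<Rightarrow> nat \<Rightarrow> real) \<Rightarrow> (nat \<Rightarrow> real) \<Rightarrow> layer" where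
  "layer_of m n W b = (map (\<lambda>k. map (W k) [0..<m]) [0..<n], map b [0..<n])"

lemma layer_ok_layer_of: "layer_ok m n (layer_of m n W b)"
  by (auto simp: layer_ok_def layer_of_def)

lemma length_affine_layer_of: "length (affine (layer_of m n W b) v) = n"
  by (simp add: affine_def layer_of_def)

lemma nth_affine_layer_of:
  assumes "length v = m" and "k < n"
  shows "affine (layer_of m n W b) v ! k = (\<Sum>j<m. W k j * v ! j) + b k"
proof -
  have "map2 (*) (map (W k) [0..<m]) v = map (\<lambda>j. W k j * v ! j) [0..<m]"
    using assms(1) by (intro nth_equalityI) auto
  then show ?thesis
    using assms by (simp add: affine_def layer_of_def sum_list_sum_nth atLeast0LessThan)
qed

definition sparse_layer :: "nat \<Rightarrow> nat \<Rightarrow> (nat \<Rightarrow> nat) \<Rightarrow> (nat \<Rightarrow> real) \<Rightarrow> (nat \<Rightarrow> nat) \<Rightarrow>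
    (nat \<Rightarrow> real) \<Rightarrow> (nat \<Rightarrow> real) \<Rightarrow> layer" where
  "sparse_layer m n a c b c' bias =
     layer_of m n (\<lambda>k j. (if j = a k then c k else 0) + (if j = b k then c' k else 0)) bias"

lemma sum_delta_mult:
  fixes m :: nat and c :: real
  shows "(\<Sum>j<m. (if j = a then c else 0) * v j) = (if a < m then c * v a else 0)"
  by (induction m) (auto simp: less_Suc_eq)

lemma layer_ok_sparse_layer: "layer_ok m n (sparse_layer m n a c b c' bias)"
  by (simp add: sparse_layer_def layer_ok_layer_of)

lemma length_affine_sparse_layer: "length (affine (sparse_layer m n a c b c' bias) v) = n"
  by (simp add: sparse_layer_def length_affine_layer_of)

lemma nth_affine_sparse_layer:
  assumes "length v = m" and "k < n"
  shows "affine (sparse_layer m n a c b c' bias) v ! k =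
    (if a k < m then c k * v ! a k else 0) + (if b k < m then c' k * v ! b k else 0) + bias k"
  using assms
  by (simp only: sparse_layer_def nth_affine_layer_of distrib_right sum.distrib sum_delta_mult)

definition relu_layer :: "layer \<Rightarrow> real list \<Rightarrow> real list" where
  "relu_layer l v = relu_vec (affine l v)"

lemma eval_net_snoc: "eval_net (ls @ [l]) x = affine l (fold relu_layer ls x)"
proof (induction ls arbitrary: x)
  case (Cons l' ls)
  then show ?case
    by (cases "ls @ [l]") (auto simp: relu_layer_def)
qed simp

lemma relu_net_uniform_width:
  assumes "layer_ok m n l\<^sub>0" and "\<forall>l \<in> set ls. layer_ok n n l" and "layer_ok n m' l\<^sub>1"
  shows "relu_net (m # replicate (Suc (length ls)) n @ [m']) (l\<^sub>0 # ls @ [l\<^sub>1])"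
  unfolding relu_net_def
proof (intro conjI allI impI)
  fix i assume "i < length (l\<^sub>0 # ls @ [l\<^sub>1])"
  then consider "i = 0" | j where "i = Suc j" "j < length ls" | "i = Suc (length ls)"
    by (cases i) (auto simp: less_Suc_eq)
  then show "layer_ok ((m # replicate (Suc (length ls)) n @ [m']) ! i)
      ((m # replicate (Suc (length ls)) n @ [m']) ! Suc i) ((l\<^sub>0 # ls @ [l\<^sub>1]) ! i)"
    by cases (use assms in \<open>auto simp: nth_append nth_Cons'\<close>)
qed simp_all

lemma net_width_uniform: "net_width (m # replicate (Suc k) n @ [m']) = n"
  by (simp add: net_width_def butlast_append set_replicate_conv_if)

definition gate :: "real \<Rightarrow> real \<Rightarrow> real" where
  "gate \<alpha> t = max ((t - (1 - \<alpha>)) / \<alpha>) 0"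

lemma gate_nonneg: "0 \<le> gate \<alpha> t"
  by (simp add: gate_def)

lemma gate_eq_0: "0 < \<alpha> \<Longrightarrow> t \<le> 1 - \<alpha> \<Longrightarrow> gate \<alpha> t = 0"
  by (simp add: gate_def divide_nonpos_pos)

lemma one_le_gate: "0 < \<alpha> \<Longrightarrow> 1 \<le> t \<Longrightarrow> 1 \<le> gate \<alpha> t"
  by (simp add: gate_def le_divide_eq)

fun alarm :: "real \<Rightarrow> real list \<Rightarrow> nat \<Rightarrow> real" where
  "alarm \<alpha> x 0 = 0"
| "alarm \<alpha> x (Suc p) =
     gate \<alpha> (gate \<alpha> (alarm \<alpha> x p + max (x ! p) 0) + max (1 - max (x ! p) 0) 0)"

lemma alarm_nonneg: "0 \<le> alarm \<alpha> x p"
  by (cases p) (simp_all add: gate_nonneg)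

lemma alarm_eq_0:
  assumes "0 < \<alpha>" and "\<forall>k<p. \<alpha> \<le> x ! k \<and> x ! k \<le> 1 - \<alpha>"
  shows "alarm \<alpha> x p = 0"
  using assms(2)
proof (induction p)
  case (Suc p)
  then have "\<alpha> \<le> x ! p" "x ! p \<le> 1 - \<alpha>" and "alarm \<alpha> x p = 0"
    by auto
  with assms(1) show ?case
    by (simp add: gate_eq_0)
qed simp

lemma one_le_alarm:
  assumes "0 < \<alpha>" and "k < p" and "x ! k < 0 \<or> 1 < x ! k"
  shows "1 \<le> alarm \<alpha> x p"
  using assms(2)
proof (induction p)
  case (Suc p)
  let ?g = "gate \<alpha> (alarm \<alpha> x p + max (x ! p) 0)"
  have "1 \<le> ?g \<or> x ! p < 0"
  proof (cases "k < p")
    case True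
    then show ?thesis
      using Suc.IH assms(1) one_le_gate by force
  next
    case False
    with Suc.prems assms(3) have "x ! p < 0 \<or> 1 < x ! p"
      by (auto simp: less_Suc_eq)
    then show ?thesis
      using alarm_nonneg[of \<alpha> x p] assms(1) one_le_gate by force
  qed
  then have "1 \<le> ?g + max (1 - max (x ! p) 0) 0"
    using gate_nonneg[of \<alpha>] by force
  then show ?case
    using assms(1) by (simp add: one_le_gate)
qed simp

definition lift_layer :: "nat \<Rightarrow> layer" where
  \<comment> \<open>row d refers to the nonexistent input column d, so the alarm neuron starts at 0\<close>
  "lift_layer d = sparse_layer d (d + 1) id (\<lambda>_. 1) id (\<lambda>_. 0) (\<lambda>_. 0)"

definition flip_layer :: "nat \<Rightarrow> real \<Rightarrow> nat \<Rightarrow> layer" where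
  "flip_layer d \<alpha> i = sparse_layer (d + 1) (d + 1) id
     (\<lambda>k. if k = d then 1 / \<alpha> else if k = i then -1 else 1) (\<lambda>_. i) (\<lambda>k. if k = d then 1 / \<alpha> else 0)
     (\<lambda>k. if k = d then - (1 - \<alpha>) / \<alpha> else if k = i then 1 else 0)"

definition check_layer :: "nat \<Rightarrow> real \<Rightarrow> nat \<Rightarrow> layer" where
  "check_layer d \<alpha> i = sparse_layer (d + 1) (d + 1) id
     (\<lambda>k. if k = d then 1 / \<alpha> else 1) (\<lambda>_. i) (\<lambda>k. if k = d then 1 / \<alpha> else 0)
     (\<lambda>k. if k = d then - (1 - \<alpha>) / \<alpha> else 0)"

definition clamp_layer :: "nat \<Rightarrow> layer" where
  "clamp_layer d = sparse_layer (d + 1) (d + 1) id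
     (\<lambda>k. if k = d then 0 else 1) (\<lambda>_. d) (\<lambda>k. if k = d then 0 else -1) (\<lambda>_. 0)"

definition output_layer :: "nat \<Rightarrow> layer" where
  "output_layer d = sparse_layer (d + 1) d id (\<lambda>_. -1) id (\<lambda>_. 0) (\<lambda>_. 1)"

definition check_layers :: "nat \<Rightarrow> real \<Rightarrow> nat \<Rightarrow> layer list" where
  "check_layers d \<alpha> p = concat (map (\<lambda>i. [flip_layer d \<alpha> i, check_layer d \<alpha> i]) [0..<p])"

definition retraction_net :: "nat \<Rightarrow> real \<Rightarrow> layer list" where
  "retraction_net d \<alpha> = (lift_layer d # check_layers d \<alpha> d @ [clamp_layer d]) @ [output_layer d]"

lemma check_layers_Suc:
  "check_layers d \<alpha> (Suc p) = check_layers d \<alpha> p @ [flip_layer d \<alpha> p, check_layer d \<alpha> p]"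
  by (simp add: check_layers_def)

lemma layer_ok_check_layers: "\<forall>l \<in> set (check_layers d \<alpha> p). layer_ok (d + 1) (d + 1) l"
  by (auto simp: check_layers_def flip_layer_def check_layer_def layer_ok_sparse_layer)

lemma gate_as_affine: "gate \<alpha> (s + t) = max (1 / \<alpha> * s + 1 / \<alpha> * t + - (1 - \<alpha>) / \<alpha>) 0"
  by (simp add: gate_def add_divide_distrib diff_divide_distrib)

lemma relu_flip_layer:
  assumes "length v = d + 1" and "\<forall>k<d. 0 \<le> v ! k" and "i < d"
  shows "relu_layer (flip_layer d \<alpha> i) v = v[i := max (1 - v ! i) 0, d := gate \<alpha> (v ! d + v ! i)]"
  using assms
  by (intro nth_equalityI)
     (auto simp: relu_layer_def relu_vec_def flip_layer_def length_affine_sparse_layer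
        nth_affine_sparse_layer gate_as_affine nth_list_update)

lemma relu_check_layer:
  assumes "length v = d + 1" and "\<forall>k<d. 0 \<le> v ! k" and "i < d"
  shows "relu_layer (check_layer d \<alpha> i) v = v[d := gate \<alpha> (v ! d + v ! i)]"
  using assms
  by (intro nth_equalityI)
     (auto simp: relu_layer_def relu_vec_def check_layer_def length_affine_sparse_layer
        nth_affine_sparse_layer gate_as_affine nth_list_update)

definition hidden_state :: "real \<Rightarrow> real list \<Rightarrow> nat \<Rightarrow> real list" where
  "hidden_state \<alpha> x p =
     map (\<lambda>k. if k < p then max (1 - max (x ! k) 0) 0 else max (x ! k) 0) [0..<length x] @ [alarm \<alpha> x p]"

lemma relu_lift_layer: "relu_layer (lift_layer (length x)) x = hidden_state \<alpha> x 0"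
  by (intro nth_equalityI)
     (auto simp: relu_layer_def relu_vec_def lift_layer_def hidden_state_def
        length_affine_sparse_layer nth_affine_sparse_layer nth_append)

lemma fold_check_pair:
  assumes "p < length x"
  shows "fold relu_layer [flip_layer (length x) \<alpha> p, check_layer (length x) \<alpha> p] (hidden_state \<alpha> x p) =
    hidden_state \<alpha> x (Suc p)"
proof -
  let ?d = "length x" and ?v = "hidden_state \<alpha> x p"
  have v: "length ?v = ?d + 1" "\<forall>k<?d. 0 \<le> ?v ! k" "?v ! p = max (x ! p) 0" "?v ! ?d = alarm \<alpha> x p"
    using assms by (auto simp: hidden_state_def nth_append)
  define w where "w = ?v[p := max (1 - ?v ! p) 0, ?d := gate \<alpha> (?v ! ?d + ?v ! p)]"
  have "relu_layer (flip_layer ?d \<alpha> p) ?v = w"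
    unfolding w_def by (rule relu_flip_layer[OF v(1,2) assms])
  moreover have w: "length w = ?d + 1" "\<forall>k<?d. 0 \<le> w ! k"
    using v assms by (auto simp: w_def nth_list_update)
  then have "relu_layer (check_layer ?d \<alpha> p) w = w[?d := gate \<alpha> (w ! ?d + w ! p)]"
    using assms by (rule relu_check_layer)
  moreover have "w[?d := gate \<alpha> (w ! ?d + w ! p)] = hidden_state \<alpha> x (Suc p)"
    using v assms
    by (intro nth_equalityI) (auto simp: w_def hidden_state_def nth_append nth_list_update)
  ultimately show ?thesis
    by simp
qed

lemma fold_check_layers:
  "p \<le> length x \<Longrightarrow>
    fold relu_layer (check_layers (length x) \<alpha> p) (hidden_state \<alpha> x 0) = hidden_state \<alpha> x p"
proof (induction p)
  case (Suc p)
  then show ?case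
    using fold_check_pair[of p x \<alpha>] by (simp add: check_layers_Suc)
qed (simp add: check_layers_def)

lemma relu_clamp_layer:
  "length v = d + 1 \<Longrightarrow> relu_layer (clamp_layer d) v = map (\<lambda>k. max (v ! k - v ! d) 0) [0..<d] @ [0]"
  by (intro nth_equalityI)
     (auto simp: relu_layer_def relu_vec_def clamp_layer_def length_affine_sparse_layer
        nth_affine_sparse_layer nth_append)

lemma affine_output_layer: "length v = d + 1 \<Longrightarrow> affine (output_layer d) v = map (\<lambda>k. 1 - v ! k) [0..<d]"
  by (intro nth_equalityI)
     (auto simp: output_layer_def length_affine_sparse_layer nth_affine_sparse_layer)

lemma eval_retraction_net:
  assumes "length x = d"
  shows "eval_net (retraction_net d \<alpha>) x =
    map (\<lambda>k. 1 - max (max (1 - max (x ! k) 0) 0 - alarm \<alpha> x d) 0) [0..<d]"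
proof -
  have "eval_net (retraction_net d \<alpha>) x =
      affine (output_layer d) (fold relu_layer (lift_layer d # check_layers d \<alpha> d @ [clamp_layer d]) x)"
    unfolding retraction_net_def by (rule eval_net_snoc)
  also have "\<dots> = affine (output_layer d) (relu_layer (clamp_layer d) (hidden_state \<alpha> x d))"
    using assms fold_check_layers[of d x \<alpha>] relu_lift_layer[of x \<alpha>] by simp
  also have "\<dots> = map (\<lambda>k. 1 - max (max (1 - max (x ! k) 0) 0 - alarm \<alpha> x d) 0) [0..<d]"
    using assms
    by (simp add: relu_clamp_layer affine_output_layer hidden_state_def nth_append)
  finally show ?thesis .
qed

theorem lemma12:
  fixes dx :: nat and \<alpha> :: real
  assumes "0 < \<alpha>" and "\<alpha> < 1/2"
  shows "\<exists>ds ls. relu_net ds ls \<and> hd ds = dx \<and> last ds = dx \<and> net_width ds = dx + 1 \<and>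
     (\<forall>x. length x = dx \<and> x \<notin> cube dx 0 1 \<longrightarrow> eval_net ls x = replicate dx 1) \<and>
     (\<forall>x \<in> cube dx \<alpha> (1 - \<alpha>). eval_net ls x = x) \<and>
     (\<forall>x. length x = dx \<longrightarrow> eval_net ls x \<in> cube dx 0 1)"
proof (intro exI conjI allI impI ballI)
  let ?hidden = "check_layers dx \<alpha> dx @ [clamp_layer dx]"
  let ?ds = "dx # replicate (Suc (length ?hidden)) (dx + 1) @ [dx]"
  show "relu_net ?ds (retraction_net dx \<alpha>)"
    unfolding retraction_net_def append_Cons
    using layer_ok_check_layers[of dx \<alpha> dx]
    by (intro relu_net_uniform_width)
       (simp_all add: lift_layer_def clamp_layer_def output_layer_def layer_ok_sparse_layer)
  show "hd ?ds = dx" "last ?ds = dx"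
    by simp_all
  show "net_width ?ds = dx + 1"
    by (rule net_width_uniform)
  fix x
  show "eval_net (retraction_net dx \<alpha>) x = replicate dx 1" if "length x = dx \<and> x \<notin> cube dx 0 1"
  proof -
    from that obtain k where "k < dx" "x ! k < 0 \<or> 1 < x ! k"
      by (auto simp: cube_def not_le)
    then have "1 \<le> alarm \<alpha> x dx"
      by (rule one_le_alarm[OF assms(1)])
    then show ?thesis
      using that by (intro nth_equalityI) (auto simp: eval_retraction_net)
  qed
  show "eval_net (retraction_net dx \<alpha>) x = x" if "x \<in> cube dx \<alpha> (1 - \<alpha>)"
  proof -
    from that have "length x = dx" and x: "\<forall>k<dx. \<alpha> \<le> x ! k \<and> x ! k \<le> 1 - \<alpha>"
      by (auto simp: cube_def)
    moreover have "alarm \<alpha> x dx = 0"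
      using assms(1) x by (rule alarm_eq_0)
    ultimately show ?thesis
      using assms(1) by (intro nth_equalityI) (auto simp: eval_retraction_net)
  qed
  show "eval_net (retraction_net dx \<alpha>) x \<in> cube dx 0 1" if "length x = dx"
    using that alarm_nonneg[of \<alpha> x dx] by (auto simp: cube_def eval_retraction_net)
qed

end
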